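(* Let $\bm\varphi \sim \mathfrak F(m,n,\Delta)$ with $\Delta=c\log n$ and $m=\alpha 2^{\Delta} n$, where $c,\alpha>0$ are constants and $c\ge 40$. Let $(\bm X,\bm Y)$ be a uniformly random partition of $[n]$. Then with high probability $(\bm X,\bm Y)$ is a $\delta$-good partition for $\bm\varphi$, for every constant $\delta\le 1/10$.
   Context: $\mathfrak F(m,n,\Delta)$: random $\Delta$-CNF over variables $[n]$ with $m$ clauses, each clause independently choosing $\Delta$ distinct variables uniformly from the $\binom n\Delta$ possibilities, with uniformly random signs. For a CNF $\varphi=\bigwedge_{i\in[m]}C_i$ over variables $[n]$ and a partition $A\sqcup B=[n]$, let $G_A=([m],A,E_A)$ be the bipartite graph joining clause $i$ to each variable of $A$ occurring in $C_i$, and similarly $G_B$. Let $\textsc{Error}_A\subseteq[m]$ (resp. $\textsc{Error}_B$) be the set of clauses whose degree in $G_A$ (resp. $G_B$) exceeds $(1-\delta)\Delta$. A bipartite graph $G=(L,R,E)$ is an $(r,\Delta,\alpha'\Delta)$-expander if all left vertices have degree at most $\Delta$ and every $S\subseteq L$ with $|S|\le r$ has $|N(S)|\ge \alpha'\Delta|S|$. $(A,B)$ is a $\delta$-good partition for $\varphi$ if: (1) $\Pr_{\bm x\sim\{0,1\}^A}[\forall i\in \textsc{Error}_A:\ C_i(\bm x,\cdot)\equiv 1]\ge 1-2^{-\Omega(\Delta)}$; (2) $\Pr_{\bm y\sim\{0,1\}^B}[\forall i\in \textsc{Error}_B:\ C_i(\cdot,\bm y)\equiv 1]\ge 1-2^{-\Omega(\Delta)}$;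 (3) $G_A-\textsc{Error}_A-\textsc{Error}_B$ and $G_B-\textsc{Error}_A-\textsc{Error}_B$ are $(r,\Delta,\delta\Delta/2)$-expanders with $r=\Omega(n/\Delta)$. Hidden constants depend on $\delta$ (and $c,\alpha$). *)

theory Defs
  imports "HOL-Probability.Probability"
begin

text \<open>A clause is a pair (S, s): S is its set of variables, s v gives the sign of
  the literal on variable v (the literal on v is satisfied by an assignment z iff z v = s v).
  A CNF with m clauses is a function from clause indices {0..<m} to clauses.\<close>

type_synonym clause = "nat set \<times> (nat \<Rightarrow> bool)"
type_synonym cnf = "nat \<Rightarrow> clause"

definition clause_space :: "nat \<Rightarrow> nat \<Rightarrow> clause set" where
  "clause_space n \<Delta> =
     {(S, s). S \<subseteq> {0..<n} \<and> card S = \<Delta> \<and> s \<in> S \<rightarrow>\<^sub>E (UNIV :: bool set)}"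

definition cnf_space :: "nat \<Rightarrow> nat \<Rightarrow> nat \<Rightarrow> cnf set" where
  "cnf_space m n \<Delta> = {0..<m} \<rightarrow>\<^sub>E clause_space n \<Delta>"

text \<open>The random formula F(m,n,Delta): m independent uniform clauses
  (uniform distribution on the product set).\<close>
definition random_cnf :: "nat \<Rightarrow> nat \<Rightarrow> nat \<Rightarrow> cnf pmf" where
  "random_cnf m n \<Delta> = pmf_of_set (cnf_space m n \<Delta>)"

text \<open>Uniformly random partition (X, [n] - X) of [n]: X uniform in Pow [n].\<close>
definition random_partition :: "nat \<Rightarrow> nat set pmf" where
  "random_partition n = pmf_of_set (Pow {0..<n})"

definition clause_sat :: "clause \<Rightarrow> (nat \<Rightarrow> bool) \<Rightarrow> bool" where
  "clause_sat C z \<longleftrightarrow> (\<exists>v \<in> fst C. z v = snd C v)"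

text \<open>C(x, .) is identically 1: for every assignment y to the variables of B,
  the combined assignment satisfies C.\<close>
definition clause_fixed :: "clause \<Rightarrow> nat set \<Rightarrow> nat set \<Rightarrow> (nat \<Rightarrow> bool) \<Rightarrow> bool" where
  "clause_fixed C A B x \<longleftrightarrow>
     (\<forall>y \<in> B \<rightarrow>\<^sub>E (UNIV :: bool set). clause_sat C (\<lambda>v. if v \<in> A then x v else y v))"

definition error_set :: "real \<Rightarrow> nat \<Rightarrow> nat \<Rightarrow> cnf \<Rightarrow> nat set \<Rightarrow> nat set" where
  "error_set \<delta> m \<Delta> \<phi> A = {i \<in> {0..<m}. real (card (fst (\<phi> i) \<inter> A)) > (1 - \<delta>) * real \<Delta>}"

text \<open>Bipartite graph with left vertex set L and neighbourhood function N
  is an (r, D, d)-expander.\<close>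
definition bip_expander :: "'l set \<Rightarrow> ('l \<Rightarrow> 'r set) \<Rightarrow> real \<Rightarrow> nat \<Rightarrow> real \<Rightarrow> bool" where
  "bip_expander L N r D d \<longleftrightarrow>
     (\<forall>i \<in> L. card (N i) \<le> D) \<and>
     (\<forall>S. S \<subseteq> L \<and> real (card S) \<le> r \<longrightarrow> real (card (\<Union>i \<in> S. N i)) \<ge> d * real (card S))"

text \<open>delta-good partition, with explicit constants eps (for 2^(-Omega(Delta)))
  and rho (for r = Omega(n/Delta)).\<close>
definition good_partition ::
  "real \<Rightarrow> real \<Rightarrow> real \<Rightarrow> nat \<Rightarrow> nat \<Rightarrow> nat \<Rightarrow> cnf \<Rightarrow> nat set \<Rightarrow> nat set \<Rightarrow> bool" where
  "good_partition \<delta> \<epsilon> \<rho> m n \<Delta> \<phi> A B \<longleftrightarrow>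
     (let EA = error_set \<delta> m \<Delta> \<phi> A; EB = error_set \<delta> m \<Delta> \<phi> B;
          L = {0..<m} - EA - EB; r = \<rho> * real n / real \<Delta> in
       measure_pmf.prob (pmf_of_set (A \<rightarrow>\<^sub>E (UNIV :: bool set)))
         {x. \<forall>i \<in> EA. clause_fixed (\<phi> i) A B x} \<ge> 1 - 2 powr (- \<epsilon> * real \<Delta>) \<and>
       measure_pmf.prob (pmf_of_set (B \<rightarrow>\<^sub>E (UNIV :: bool set)))
         {y. \<forall>i \<in> EB. clause_fixed (\<phi> i) B A y} \<ge> 1 - 2 powr (- \<epsilon> * real \<Delta>) \<and>
       bip_expander L (\<lambda>i. fst (\<phi> i) \<inter> A) r \<Delta> (\<delta> * real \<Delta> / 2) \<and>
       bip_expander L (\<lambda>i. fst (\<phi> i) \<inter> B) r \<Delta> (\<delta> * real \<Delta> / 2))"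

definition width :: "real \<Rightarrow> nat \<Rightarrow> nat" where
  "width c n = nat \<lceil>c * log 2 (real n)\<rceil>"

definition num_clauses :: "real \<Rightarrow> real \<Rightarrow> nat \<Rightarrow> nat" where
  "num_clauses \<alpha> c n = nat \<lfloor>\<alpha> * 2 ^ width c n * real n\<rfloor>"

end

theory Submission
  imports Defs "HOL-Real_Asymp.Real_Asymp"
begin

text \<open>A clause is unbalanced if more than (1 - \<delta>)D of its D variables fall on one side of the
  partition; the unbalanced clauses are exactly the error clauses. A Chernoff-type estimate shows
  that a clause is unbalanced with probability at most 2 * 2^(-0.4D), so by Markov's inequality
  more than 2^(0.7D) clauses are unbalanced only with probability 2m * 2^(-1.1D) = O(n^(1 - c/10)).
  Each error clause has more than 0.9D variables on its large side, so a union bound over at most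
  2^(0.7D) of them shows that a random assignment of that side fixes them all except with
  probability 2^(-D/5).
  A balanced clause has at least \<delta>D variables on each side. If expansion fails, then some
  s \<le> \<rho>n/D clauses each have \<delta>D variables inside one set of \<delta>Ds/2 variables; with
  \<rho> = 2^(-6/\<delta>)/e, a first-moment count over s, the clauses and the set bounds the probability
  of such a configuration by n * m * 2^(-2D) = O(n^(2 - c)).\<close>

section \<open>Probability and binomial estimates\<close>

lemma pair_pmf_of_set:
  assumes "finite A" "A \<noteq> {}" "finite B" "B \<noteq> {}"
  shows "pair_pmf (pmf_of_set A) (pmf_of_set B) = pmf_of_set (A \<times> B)"
proof (rule pmf_eqI)
  fix z :: "'a \<times> 'b"
  show "pmf (pair_pmf (pmf_of_set A) (pmf_of_set B)) z = pmf (pmf_of_set (A \<times> B)) z"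
    using assms by (cases z) (simp add: pmf_pair card_cartesian_product indicator_def)
qed

lemma prob_fst_pair_pmf:
  "measure_pmf.prob (pair_pmf p q) {\<omega>. P (fst \<omega>)} = measure_pmf.prob p {x. P x}"
proof -
  have "measure_pmf.prob (pair_pmf p q) {\<omega>. P (fst \<omega>)} = measure_pmf.prob (map_pmf fst (pair_pmf p q)) {x. P x}"
    by (simp add: vimage_def)
  then show ?thesis by (simp add: map_fst_pair_pmf)
qed

lemma prob_ge_one_minus_bad_events:
  assumes "\<And>\<omega>. \<omega> \<in> set_pmf p \<Longrightarrow> \<omega> \<notin> B\<^sub>1 \<Longrightarrow> \<omega> \<notin> B\<^sub>2 \<Longrightarrow> \<omega> \<in> G"
  shows "1 - measure_pmf.prob p B\<^sub>1 - measure_pmf.prob p B\<^sub>2 \<le> measure_pmf.prob p G"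
proof -
  have "1 = measure_pmf.prob p (set_pmf p)"
    by (metis inf_top_left measure_Int_set_pmf measure_pmf_UNIV)
  also have "\<dots> \<le> measure_pmf.prob p (G \<union> B\<^sub>1 \<union> B\<^sub>2)"
    using assms by (intro measure_pmf.finite_measure_mono) auto
  also have "\<dots> \<le> measure_pmf.prob p G + measure_pmf.prob p B\<^sub>1 + measure_pmf.prob p B\<^sub>2"
    using measure_Un_le[of "G \<union> B\<^sub>1" "measure_pmf p" B\<^sub>2] measure_Un_le[of G "measure_pmf p" B\<^sub>1]
    by simp
  finally show ?thesis by simp
qed

lemma binomial_Suc_mult_Suc:
  "real (n choose Suc k) * real (Suc k) = real (n choose k) * (real n - real k)"
proof (cases "k \<le> n")
  case True
  have "(n choose Suc k) * Suc k = (n choose k) * (n - k)"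
    by (metis binomial_absorb_comp binomial_absorption mult.commute)
  then show ?thesis using True by (metis of_nat_diff of_nat_mult)
next
  case False
  then show ?thesis by (simp add: binomial_eq_0)
qed

lemma binomial_mult_power_le:
  assumes "t \<le> n"
  shows "real (t choose k) * real n ^ k \<le> real (n choose k) * real t ^ k"
proof (induction k)
  case 0
  then show ?case by simp
next
  case (Suc k)
  show ?case
  proof (cases "k \<le> t")
    case False
    then show ?thesis by (simp add: binomial_eq_0)
  next
    case True
    have "real (t choose Suc k) * real n ^ Suc k * real (Suc k)
        = (real (t choose k) * real n ^ k) * ((real t - real k) * real n)"
      by (simp add: binomial_Suc_mult_Suc[of t, symmetric] mult_ac)
    also have "\<dots> \<le> (real (n choose k) * real t ^ k) * ((real t - real k) * real n)"
      using Suc.IH True by (intro mult_right_mono) auto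
    also have "\<dots> \<le> (real (n choose k) * real t ^ k) * ((real n - real k) * real t)"
      using assms by (intro mult_left_mono) (auto simp: algebra_simps mult_left_mono)
    also have "\<dots> = real (n choose Suc k) * real t ^ Suc k * real (Suc k)"
      by (simp add: binomial_Suc_mult_Suc[of n, symmetric] mult_ac)
    finally show ?thesis by simp
  qed
qed

lemma power_div_fact_le_exp:
  fixes x :: real
  assumes "0 \<le> x"
  shows "x ^ k / fact k \<le> exp x"
proof -
  have "x ^ k / fact k = (\<Sum>i\<in>{k}. x ^ i / fact i)" by simp
  also have "\<dots> \<le> (\<Sum>i. x ^ i / fact i)"
    using assms summable_exp[of x] by (intro sum_le_suminf) (auto simp: divide_inverse mult.commute)
  also have "\<dots> = exp x" by (simp add: exp_def inverse_eq_divide scaleR_conv_of_real)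
  finally show ?thesis .
qed

lemma binomial_mult_ratio_power_le_exp:
  "real (n choose t) * (real t / real n) ^ t \<le> exp (real t)"
proof (cases "n = 0")
  case True
  then show ?thesis by (cases t) auto
next
  case False
  have "real (n choose t) * fact t \<le> real n ^ t"
    using binomial_fact_pow[of n t] by (metis of_nat_fact of_nat_le_iff of_nat_mult of_nat_power)
  then have "real (n choose t) * fact t * (real t / real n) ^ t \<le> real n ^ t * (real t / real n) ^ t"
    by (intro mult_right_mono) auto
  then have "real (n choose t) * (real t / real n) ^ t \<le> real t ^ t / fact t"
    using False by (simp add: field_simps)
  also have "\<dots> \<le> exp (real t)" by (rule power_div_fact_le_exp) simp
  finally show ?thesis .
qed

lemma binomial_mult_ratio_power_le:
  assumes "2 * t \<le> j" "real t \<le> \<rho> * real n" "0 \<le> \<rho>" "exp 1 * \<rho> \<le> 1"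
  shows "real (n choose t) * (real t / real n) ^ j \<le> (exp 1 * \<rho>) ^ (j - t)"
proof -
  define x where "x = real t / real n"
  have x0: "0 \<le> x" unfolding x_def by simp
  have x\<rho>: "x \<le> \<rho>"
    using assms(2,3) unfolding x_def by (cases "n = 0") (auto simp: field_simps)
  have tj: "real t \<le> real (j - t)" using assms(1) by linarith
  have "real (n choose t) * x ^ j = (real (n choose t) * x ^ t) * x ^ (j - t)"
    using assms(1) by (simp add: power_add[symmetric])
  also have "\<dots> \<le> exp (real (j - t)) * x ^ (j - t)"
    using binomial_mult_ratio_power_le_exp[of n t] tj x0
    by (intro mult_right_mono) (auto simp: x_def intro: order_trans)
  also have "\<dots> = (exp 1 * x) ^ (j - t)"
    by (simp add: power_mult_distrib exp_of_nat_mult[symmetric])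
  also have "\<dots> \<le> (exp 1 * \<rho>) ^ (j - t)"
    using x0 x\<rho> by (intro power_mono mult_left_mono) auto
  finally show ?thesis unfolding x_def .
qed

lemma five_le_two_powr: "(5::real) \<le> 2 powr (12/5)"
proof -
  have "(5::real) ^ 5 \<le> 2 powr 12" by simp
  also have "\<dots> = (2 powr (12/5)) ^ 5" by (simp add: powr_realpow[symmetric] powr_powr)
  finally show ?thesis using power_le_imp_le_base[of "5::real" 4 "2 powr (12/5)"] by simp
qed

text \<open>Each index j in the tail has weight 4^j 2^(-1.8D) at least 1; the total weight is
  5^D 2^(-1.8D) by the binomial theorem.\<close>
lemma sum_binomial_upper_tail_le:
  "(\<Sum>j | j \<le> D \<and> 0.9 * D < real j. real (D choose j)) \<le> 2 powr (0.6 * D)"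
proof -
  let ?J = "{j. j \<le> D \<and> 0.9 * D < real j}"
  have four: "(4::real) ^ j = 2 powr (2 * real j)" for j
  proof -
    have "(4::real) ^ j = 2 ^ (2 * j)" by (simp add: power_mult)
    then show ?thesis by (simp add: powr_realpow[symmetric])
  qed
  have "(\<Sum>j\<in>?J. real (D choose j)) \<le> (\<Sum>j\<in>?J. real (D choose j) * (4 ^ j * 2 powr (-1.8 * D)))"
  proof (rule sum_mono)
    fix j assume "j \<in> ?J"
    then have "1 \<le> 2 powr (2 * real j + (-1.8 * D))" by (intro ge_one_powr_ge_zero) auto
    then have "1 \<le> 4 ^ j * 2 powr (-1.8 * D)" by (simp only: four powr_add)
    then show "real (D choose j) \<le> real (D choose j) * (4 ^ j * 2 powr (-1.8 * D))"
      using mult_left_mono[of 1 _ "real (D choose j)"] by simp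
  qed
  also have "\<dots> \<le> (\<Sum>j\<le>D. real (D choose j) * (4 ^ j * 2 powr (-1.8 * D)))"
    by (intro sum_mono2) auto
  also have "\<dots> = 5 ^ D * 2 powr (-1.8 * D)"
    using binomial_ring[of "4::real" 1 D] by (simp add: sum_distrib_right mult_ac)
  also have "\<dots> \<le> 2 powr (12/5 * D) * 2 powr (-1.8 * D)"
    using power_mono[OF five_le_two_powr, of D] by (simp add: powr_realpow[symmetric] powr_powr)
  also have "\<dots> = 2 powr (0.6 * D)" by (simp add: powr_add[symmetric])
  finally show ?thesis .
qed

lemma sum_binomial_lower_tail_le:
  "(\<Sum>j | j \<le> D \<and> real j < 0.1 * D. real (D choose j)) \<le> 2 powr (0.6 * D)"
proof -
  have "(\<Sum>j | j \<le> D \<and> real j < 0.1 * D. real (D choose j)) = (\<Sum>j | j \<le> D \<and> 0.9 * D < real j. real (D choose j))"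
    by (rule sum.reindex_bij_witness[where i = "\<lambda>j. D - j" and j = "\<lambda>j. D - j"])
      (auto simp: of_nat_diff binomial_symmetric[symmetric])
  then show ?thesis using sum_binomial_upper_tail_le[of D] by simp
qed

lemma sum_binomial_unbalanced_le:
  fixes \<delta> :: real
  assumes "0 < \<delta>" "\<delta> \<le> 1/10"
  shows "(\<Sum>j | j \<le> D \<and> ((1-\<delta>) * D < real j \<or> (1-\<delta>) * D < real D - real j). real (D choose j))
         \<le> 2 * 2 powr (0.6 * D)"
proof -
  let ?U = "{j. j \<le> D \<and> 0.9 * D < real j}" and ?L = "{j. j \<le> D \<and> real j < 0.1 * D}"
  have "0.9 * real D \<le> (1-\<delta>) * D" using assms by (intro mult_right_mono) auto
  moreover have "\<delta> * D \<le> 0.1 * real D" using assms by (intro mult_right_mono) auto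
  ultimately have "{j. j \<le> D \<and> ((1-\<delta>) * D < real j \<or> (1-\<delta>) * D < real D - real j)} \<subseteq> ?U \<union> ?L"
    by (auto simp: algebra_simps)
  then have "(\<Sum>j | j \<le> D \<and> ((1-\<delta>) * D < real j \<or> (1-\<delta>) * D < real D - real j). real (D choose j))
      \<le> (\<Sum>j\<in>?U \<union> ?L. real (D choose j))"
    by (intro sum_mono2) auto
  also have "\<dots> = (\<Sum>j\<in>?U. real (D choose j)) + (\<Sum>j\<in>?L. real (D choose j))"
    by (intro sum.union_disjoint) auto
  also have "\<dots> \<le> 2 * 2 powr (0.6 * D)"
    using sum_binomial_upper_tail_le[of D] sum_binomial_lower_tail_le[of D] by simp
  finally show ?thesis .
qed

section \<open>Counting subsets\<close>

lemma card_Pow_card_Int_eq: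
  assumes "finite U" "S \<subseteq> U"
  shows "card {X \<in> Pow U. card (S \<inter> X) = j} = (card S choose j) * 2 ^ (card U - card S)"
proof -
  have fS: "finite S" using assms finite_subset by blast
  let ?P = "{Y. Y \<subseteq> S \<and> card Y = j} \<times> Pow (U - S)"
  have "Y \<union> Z \<in> {X \<in> Pow U. card (S \<inter> X) = j}" if "(Y, Z) \<in> ?P" for Y Z
  proof -
    from that have "S \<inter> (Y \<union> Z) = Y" by auto
    with that assms show ?thesis by auto
  qed
  then have "bij_betw (\<lambda>(Y, Z). Y \<union> Z) ?P {X \<in> Pow U. card (S \<inter> X) = j}"
    by (intro bij_betw_byWitness[where f' = "\<lambda>X. (S \<inter> X, X - S)"]) auto
  then have "card {X \<in> Pow U. card (S \<inter> X) = j} = card ?P"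
    by (simp add: bij_betw_same_card)
  also have "\<dots> = (card S choose j) * 2 ^ (card U - card S)"
    using assms fS by (simp add: card_cartesian_product n_subsets card_Pow card_Diff_subset)
  finally show ?thesis .
qed

lemma card_Pow_filter_card_Int:
  assumes "finite U" "S \<subseteq> U"
  shows "card {X \<in> Pow U. P (card (S \<inter> X))} =
         (\<Sum>j | j \<le> card S \<and> P j. card S choose j) * 2 ^ (card U - card S)"
proof -
  have fS: "finite S" using assms finite_subset by blast
  have eq: "{X \<in> Pow U. P (card (S \<inter> X))} = (\<Union>j\<in>{j. j \<le> card S \<and> P j}. {X \<in> Pow U. card (S \<inter> X) = j})"
    using fS by (auto intro: card_mono)
  have "card {X \<in> Pow U. P (card (S \<inter> X))}
      = (\<Sum>j | j \<le> card S \<and> P j. card {X \<in> Pow U. card (S \<inter> X) = j})"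
    unfolding eq using assms by (intro card_UN_disjoint) auto
  also have "\<dots> = (\<Sum>j | j \<le> card S \<and> P j. (card S choose j) * 2 ^ (card U - card S))"
    by (simp only: card_Pow_card_Int_eq[OF assms])
  finally show ?thesis by (simp add: sum_distrib_right)
qed

lemma card_PiE_avoiding:
  assumes "finite A" "K \<subseteq> A"
  shows "card {x \<in> A \<rightarrow>\<^sub>E (UNIV :: bool set). \<forall>v\<in>K. x v \<noteq> s v} = 2 ^ (card A - card K)"
proof -
  have "{x \<in> A \<rightarrow>\<^sub>E (UNIV :: bool set). \<forall>v\<in>K. x v \<noteq> s v} = Pi\<^sub>E A (\<lambda>v. if v \<in> K then {\<not> s v} else UNIV)"
    using assms(2) by (auto simp: PiE_iff extensional_def split: if_splits)
  moreover have "card (Pi\<^sub>E A (\<lambda>v. if v \<in> K then {\<not> s v} else (UNIV :: bool set))) = 2 ^ card (A - K)"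
    using assms by (simp add: card_PiE if_distrib prod.If_cases Diff_eq[symmetric])
  ultimately show ?thesis
    using assms by (simp add: card_Diff_subset finite_subset)
qed

lemma card_Markov:
  fixes K :: real
  assumes "finite \<Omega>" "finite I" "0 < K"
  shows "real (card {\<omega> \<in> \<Omega>. K < real (card {i \<in> I. Q \<omega> i})})
         \<le> (\<Sum>i\<in>I. real (card {\<omega> \<in> \<Omega>. Q \<omega> i})) / K"
proof -
  let ?B = "{\<omega> \<in> \<Omega>. K < real (card {i \<in> I. Q \<omega> i})}"
  have "K * real (card ?B) = (\<Sum>\<omega>\<in>?B. K)" by simp
  also have "\<dots> \<le> (\<Sum>\<omega>\<in>?B. real (card {i \<in> I. Q \<omega> i}))"
    by (rule sum_mono) simp
  also have "\<dots> \<le> (\<Sum>\<omega>\<in>\<Omega>. real (card {i \<in> I. Q \<omega> i}))"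
    using assms by (intro sum_mono2) auto
  also have "\<dots> = (\<Sum>\<omega>\<in>\<Omega>. \<Sum>i\<in>I. if Q \<omega> i then 1 else 0)"
    using assms by (simp add: sum.inter_filter[symmetric])
  also have "\<dots> = (\<Sum>i\<in>I. real (card {\<omega> \<in> \<Omega>. Q \<omega> i}))"
    using assms by (subst sum.swap) (simp add: sum.inter_filter[symmetric])
  finally show ?thesis using assms by (simp add: field_simps)
qed

lemma obtain_superset_with_card:
  assumes "finite U" "N \<subseteq> U" "card N \<le> t" "t \<le> card U"
  obtains T where "N \<subseteq> T" "T \<subseteq> U" "card T = t"
proof -
  have fN: "finite N" using assms finite_subset by blast
  have "t - card N \<le> card (U - N)" using assms fN by (simp add: card_Diff_subset)
  then obtain R where R: "R \<subseteq> U - N" "card R = t - card N" by (meson obtain_subset_with_card_n)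
  then have "card (N \<union> R) = t"
    using assms fN finite_subset[of R U] by (subst card_Un_disjoint) auto
  with R assms that show ?thesis by blast
qed

lemma card_subsets_supset_le:
  assumes "finite U" "K \<subseteq> U"
  shows "card {S. S \<subseteq> U \<and> card S = D \<and> K \<subseteq> S} \<le> (card U - card K) choose (D - card K)"
proof -
  have fK: "finite K" using assms finite_subset by blast
  have "inj_on (\<lambda>S. S - K) {S. S \<subseteq> U \<and> card S = D \<and> K \<subseteq> S}"
    by (rule inj_onI) blast
  moreover have "(\<lambda>S. S - K) ` {S. S \<subseteq> U \<and> card S = D \<and> K \<subseteq> S} \<subseteq> {Y. Y \<subseteq> U - K \<and> card Y = D - card K}"
    using fK by (auto simp: card_Diff_subset)
  moreover have "finite {Y. Y \<subseteq> U - K \<and> card Y = D - card K}"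
    using assms by simp
  ultimately have "card {S. S \<subseteq> U \<and> card S = D \<and> K \<subseteq> S} \<le> card {Y. Y \<subseteq> U - K \<and> card Y = D - card K}"
    by (rule card_inj_on_le)
  also have "\<dots> = (card U - card K) choose (D - card K)"
    using assms fK by (simp add: n_subsets card_Diff_subset)
  finally show ?thesis .
qed

lemma card_subsets_hitting_le:
  assumes "finite U" "T \<subseteq> U"
  shows "card {S. S \<subseteq> U \<and> card S = D \<and> k \<le> card (S \<inter> T)} \<le> (card T choose k) * ((card U - k) choose (D - k))"
proof -
  have fT: "finite T" using assms finite_subset by blast
  let ?K = "{K. K \<subseteq> T \<and> card K = k}"
  have "{S. S \<subseteq> U \<and> card S = D \<and> k \<le> card (S \<inter> T)} \<subseteq> (\<Union>K\<in>?K. {S. S \<subseteq> U \<and> card S = D \<and> K \<subseteq> S})"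
  proof
    fix S assume "S \<in> {S. S \<subseteq> U \<and> card S = D \<and> k \<le> card (S \<inter> T)}"
    then have "S \<subseteq> U" "card S = D" "k \<le> card (S \<inter> T)" by auto
    moreover obtain K where "K \<subseteq> S \<inter> T" "card K = k"
      using obtain_subset_with_card_n[OF \<open>k \<le> card (S \<inter> T)\<close>] by blast
    ultimately show "S \<in> (\<Union>K\<in>?K. {S. S \<subseteq> U \<and> card S = D \<and> K \<subseteq> S})" by auto
  qed
  then have "card {S. S \<subseteq> U \<and> card S = D \<and> k \<le> card (S \<inter> T)}
      \<le> card (\<Union>K\<in>?K. {S. S \<subseteq> U \<and> card S = D \<and> K \<subseteq> S})"
    using assms fT by (intro card_mono) auto
  also have "\<dots> \<le> (\<Sum>K\<in>?K. card {S. S \<subseteq> U \<and> card S = D \<and> K \<subseteq> S})"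
    using fT by (intro card_UN_le) simp
  also have "\<dots> \<le> (\<Sum>K\<in>?K. (card U - k) choose (D - k))"
  proof (rule sum_mono)
    fix K assume "K \<in> ?K"
    then show "card {S. S \<subseteq> U \<and> card S = D \<and> K \<subseteq> S} \<le> (card U - k) choose (D - k)"
      using card_subsets_supset_le[of U K D] assms by auto
  qed
  also have "\<dots> = (card T choose k) * ((card U - k) choose (D - k))"
    using fT by (simp add: n_subsets)
  finally show ?thesis .
qed

lemma card_Int_add_card_Int_Diff:
  assumes "finite C" "C \<subseteq> U"
  shows "card (C \<inter> X) + card (C \<inter> (U - X)) = card C"
proof -
  have "C \<inter> (U - X) = C - X" using assms by auto
  then show ?thesis using card_Int_Diff[OF assms(1)] by simp
qed

section \<open>Random clauses and formulas\<close>

lemma clause_space_eq_Sigma: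
  "clause_space n D = Sigma {S. S \<subseteq> {0..<n} \<and> card S = D} (\<lambda>S. S \<rightarrow>\<^sub>E (UNIV :: bool set))"
  unfolding clause_space_def by auto

lemma finite_assignments:
  fixes S :: "nat set"
  assumes "S \<subseteq> {0..<n}"
  shows "finite (S \<rightarrow>\<^sub>E (UNIV :: bool set))"
  using finite_subset[OF assms] by (intro finite_PiE) auto

lemma finite_clause_space: "finite (clause_space n D)"
  unfolding clause_space_eq_Sigma
  by (rule finite_SigmaI) (auto intro: finite_subset[of _ "Pow {0..<n}"] finite_assignments)

lemma card_clause_space_filter:
  "card {C \<in> clause_space n D. Q (fst C)} = card {S. S \<subseteq> {0..<n} \<and> card S = D \<and> Q S} * 2 ^ D"
proof -
  have "{C \<in> clause_space n D. Q (fst C)}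
      = Sigma {S. S \<subseteq> {0..<n} \<and> card S = D \<and> Q S} (\<lambda>S. S \<rightarrow>\<^sub>E (UNIV :: bool set))"
    unfolding clause_space_eq_Sigma by auto
  then have "card {C \<in> clause_space n D. Q (fst C)}
      = (\<Sum>S | S \<subseteq> {0..<n} \<and> card S = D \<and> Q S. card (S \<rightarrow>\<^sub>E (UNIV :: bool set)))"
    by (simp only:) (rule card_SigmaI, auto intro: finite_subset[of _ "Pow {0..<n}"] finite_assignments)
  also have "\<dots> = (\<Sum>S | S \<subseteq> {0..<n} \<and> card S = D \<and> Q S. 2 ^ D)"
    by (intro sum.cong refl) (auto simp: card_PiE finite_subset)
  finally show ?thesis by simp
qed

lemma card_clause_space: "card (clause_space n D) = (n choose D) * 2 ^ D"
  using card_clause_space_filter[of n D "\<lambda>_. True"] by (simp add: n_subsets)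

lemma clause_space_nonempty: "D \<le> n \<Longrightarrow> clause_space n D \<noteq> {}"
  using card_clause_space[of n D] by auto

lemma clause_hitting_ratio_le:
  assumes "T \<subseteq> {0..<n}" "k \<le> D" "D \<le> n" "0 < n"
  shows "real (card {C \<in> clause_space n D. k \<le> card (fst C \<inter> T)}) / real (card (clause_space n D))
         \<le> 2 ^ D * (real (card T) / real n) ^ k"
proof -
  have Tn: "card T \<le> n" using assms card_mono[of "{0..<n}" T] by auto
  have pos: "0 < real (n choose k)" "0 < real (n choose D)" using assms by auto
  have "real (card {C \<in> clause_space n D. k \<le> card (fst C \<inter> T)}) / real (card (clause_space n D))
      = real (card {S. S \<subseteq> {0..<n} \<and> card S = D \<and> k \<le> card (S \<inter> T)}) / real (n choose D)"
    using card_clause_space_filter[of n D "\<lambda>S. k \<le> card (S \<inter> T)"] by (simp add: card_clause_space)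
  also have "\<dots> \<le> real (card T choose k) * real ((n - k) choose (D - k)) / real (n choose D)"
    using card_subsets_hitting_le[of "{0..<n}" T D k] assms pos
    by (intro divide_right_mono) (simp_all flip: of_nat_mult)
  also have "\<dots> = real (D choose k) * (real (card T choose k) / real (n choose k))"
  proof -
    have "real (n choose D) * real (D choose k) = real (n choose k) * real ((n - k) choose (D - k))"
      using choose_mult[OF assms(2,3)] by (simp flip: of_nat_mult)
    then show ?thesis using pos by (simp add: field_simps)
  qed
  also have "\<dots> \<le> 2 ^ D * (real (card T) / real n) ^ k"
  proof (intro mult_mono)
    show "real (D choose k) \<le> 2 ^ D"
      using binomial_le_pow2[of D k] by (simp flip: of_nat_le_iff)
    show "real (card T choose k) / real (n choose k) \<le> (real (card T) / real n) ^ k"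
      using binomial_mult_power_le[OF Tn, of k] pos assms(4) by (simp add: field_simps)
  qed simp_all
  finally show ?thesis .
qed

lemma finite_cnf_space: "finite (cnf_space m n D)"
  unfolding cnf_space_def by (intro finite_PiE finite_clause_space) simp

lemma card_cnf_space: "card (cnf_space m n D) = card (clause_space n D) ^ m"
  unfolding cnf_space_def by (simp add: card_PiE finite_clause_space)

lemma cnf_space_clause:
  assumes "\<phi> \<in> cnf_space m n D" "i < m"
  shows "fst (\<phi> i) \<subseteq> {0..<n}" "card (fst (\<phi> i)) = D" "finite (fst (\<phi> i))"
proof -
  have "\<phi> i \<in> clause_space n D" using assms unfolding cnf_space_def by auto
  then show "fst (\<phi> i) \<subseteq> {0..<n}" "card (fst (\<phi> i)) = D" "finite (fst (\<phi> i))"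
    unfolding clause_space_def by (auto intro: finite_subset[of _ "{0..<n}"])
qed

lemma card_cnf_space_filter:
  assumes "I \<subseteq> {0..<m}" "G \<subseteq> clause_space n D"
  shows "card {\<phi> \<in> cnf_space m n D. \<forall>i\<in>I. \<phi> i \<in> G}
         = card G ^ card I * card (clause_space n D) ^ (m - card I)"
proof -
  let ?F = "\<lambda>i. if i \<in> I then G else clause_space n D"
  have "\<phi> \<in> {\<phi> \<in> cnf_space m n D. \<forall>i\<in>I. \<phi> i \<in> G} \<longleftrightarrow> \<phi> \<in> Pi\<^sub>E {0..<m} ?F" for \<phi>
  proof -
    have "(\<forall>i\<in>{0..<m}. \<phi> i \<in> clause_space n D) \<and> (\<forall>i\<in>I. \<phi> i \<in> G) \<longleftrightarrow> (\<forall>i\<in>{0..<m}. \<phi> i \<in> ?F i)"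
      using assms by auto
    then show ?thesis unfolding cnf_space_def PiE_iff by blast
  qed
  then have "{\<phi> \<in> cnf_space m n D. \<forall>i\<in>I. \<phi> i \<in> G} = Pi\<^sub>E {0..<m} ?F"
    by (rule set_eqI)
  then have "card {\<phi> \<in> cnf_space m n D. \<forall>i\<in>I. \<phi> i \<in> G} = (\<Prod>i\<in>{0..<m}. card (?F i))"
    by (simp add: card_PiE)
  also have "\<dots> = card G ^ card I * card (clause_space n D) ^ card ({0..<m} - I)"
  proof -
    have "{0..<m} \<inter> {i. i \<in> I} = I" "{0..<m} \<inter> - {i. i \<in> I} = {0..<m} - I"
      using assms by auto
    then show ?thesis by (simp add: if_distrib prod.If_cases)
  qed
  also have "card ({0..<m} - I) = m - card I"
    using assms by (simp add: card_Diff_subset finite_subset)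
  finally show ?thesis .
qed

lemma cnf_hitting_ratio_le:
  assumes "I \<subseteq> {0..<m}" "T \<subseteq> {0..<n}" "k \<le> D" "D \<le> n" "0 < n"
  shows "real (card {\<phi> \<in> cnf_space m n D. \<forall>i\<in>I. k \<le> card (fst (\<phi> i) \<inter> T)}) / real (card (cnf_space m n D))
         \<le> (2 ^ D * (real (card T) / real n) ^ k) ^ card I"
proof -
  define G where "G = {C \<in> clause_space n D. k \<le> card (fst C \<inter> T)}"
  have CS: "0 < card (clause_space n D)"
    using assms finite_clause_space clause_space_nonempty by (simp add: card_gt_0_iff)
  have Im: "card I \<le> m" using assms card_mono[of "{0..<m}" I] by simp
  have "{\<phi> \<in> cnf_space m n D. \<forall>i\<in>I. k \<le> card (fst (\<phi> i) \<inter> T)} = {\<phi> \<in> cnf_space m n D. \<forall>i\<in>I. \<phi> i \<in> G}"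
    using assms unfolding G_def cnf_space_def by auto
  then have "real (card {\<phi> \<in> cnf_space m n D. \<forall>i\<in>I. k \<le> card (fst (\<phi> i) \<inter> T)}) / real (card (cnf_space m n D))
      = real (card G) ^ card I * real (card (clause_space n D)) ^ (m - card I) / real (card (clause_space n D)) ^ m"
    using card_cnf_space_filter[OF assms(1), of G] by (simp add: G_def card_cnf_space)
  also have "\<dots> = (real (card G) / real (card (clause_space n D))) ^ card I"
  proof -
    have "real (card (clause_space n D)) ^ m
        = real (card (clause_space n D)) ^ card I * real (card (clause_space n D)) ^ (m - card I)"
      using Im by (simp add: power_add[symmetric])
    then show ?thesis using CS by (simp add: power_divide)
  qed
  also have "\<dots> \<le> (2 ^ D * (real (card T) / real n) ^ k) ^ card I"
    unfolding G_def using clause_hitting_ratio_le[OF assms(2-5)] by (intro power_mono) auto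
  finally show ?thesis .
qed

section \<open>Good partitions of typical formulas\<close>

definition unbalanced_clauses :: "real \<Rightarrow> nat \<Rightarrow> nat \<Rightarrow> nat \<Rightarrow> cnf \<Rightarrow> nat set \<Rightarrow> nat set" where
  "unbalanced_clauses \<delta> m n D \<phi> X = error_set \<delta> m D \<phi> X \<union> error_set \<delta> m D \<phi> ({0..<n} - X)"

text \<open>The configuration forced by a failure of expansion among the balanced clauses.\<close>
definition has_dense_clause_set :: "real \<Rightarrow> real \<Rightarrow> nat \<Rightarrow> nat \<Rightarrow> nat \<Rightarrow> cnf \<Rightarrow> bool" where
  "has_dense_clause_set \<delta> \<rho> m n D \<phi> \<longleftrightarrow>
     (\<exists>s I T. 1 \<le> s \<and> real s \<le> \<rho> * real n / real D \<and> I \<subseteq> {0..<m} \<and> card I = s \<and>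
        T \<subseteq> {0..<n} \<and> card T = nat \<lfloor>\<delta> * real D * real s / 2\<rfloor> \<and>
        (\<forall>i\<in>I. nat \<lceil>\<delta> * real D\<rceil> \<le> card (fst (\<phi> i) \<inter> T)))"

lemma card_clause_split:
  assumes "\<phi> \<in> cnf_space m n D" "i < m"
  shows "card (fst (\<phi> i) \<inter> X) + card (fst (\<phi> i) \<inter> ({0..<n} - X)) = D"
  using card_Int_add_card_Int_Diff[of "fst (\<phi> i)" "{0..<n}" X] cnf_space_clause[OF assms] by simp

lemma balanced_clause_side_ge:
  assumes "\<phi> \<in> cnf_space m n D" "i < m" "i \<notin> error_set \<delta> m D \<phi> ({0..<n} - X)"
  shows "\<delta> * real D \<le> real (card (fst (\<phi> i) \<inter> X))"
proof -
  have "real (card (fst (\<phi> i) \<inter> X)) + real (card (fst (\<phi> i) \<inter> ({0..<n} - X))) = real D"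
    using card_clause_split[OF assms(1,2), of X] by (simp flip: of_nat_add)
  then show ?thesis using assms(2,3) by (simp add: error_set_def algebra_simps)
qed

lemma prob_clauses_fixed_ge:
  fixes \<phi> :: cnf and A B E :: "nat set" and a :: real
  assumes "finite A" "finite E" "\<And>i. i \<in> E \<Longrightarrow> a \<le> real (card (fst (\<phi> i) \<inter> A))"
  shows "1 - real (card E) * 2 powr (- a)
         \<le> measure_pmf.prob (pmf_of_set (A \<rightarrow>\<^sub>E (UNIV :: bool set))) {x. \<forall>i\<in>E. clause_fixed (\<phi> i) A B x}"
proof -
  let ?p = "pmf_of_set (A \<rightarrow>\<^sub>E (UNIV :: bool set))"
  define Bad where "Bad i = {x. \<forall>v \<in> fst (\<phi> i) \<inter> A. x v \<noteq> snd (\<phi> i) v}" for i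
  have P: "finite (A \<rightarrow>\<^sub>E (UNIV :: bool set))" "A \<rightarrow>\<^sub>E (UNIV :: bool set) \<noteq> {}"
    using assms(1) by (auto simp: finite_PiE PiE_eq_empty_iff)
  have bad: "measure_pmf.prob ?p (Bad i) \<le> 2 powr (- a)" if "i \<in> E" for i
  proof -
    let ?k = "card (fst (\<phi> i) \<inter> A)"
    have "(A \<rightarrow>\<^sub>E UNIV) \<inter> Bad i = {x \<in> A \<rightarrow>\<^sub>E (UNIV :: bool set). \<forall>v \<in> fst (\<phi> i) \<inter> A. x v \<noteq> snd (\<phi> i) v}"
      by (auto simp: Bad_def)
    then have "card ((A \<rightarrow>\<^sub>E UNIV) \<inter> Bad i) = 2 ^ (card A - ?k)"
      using card_PiE_avoiding[OF assms(1)] by simp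
    moreover have "?k \<le> card A" using assms(1) by (intro card_mono) auto
    ultimately have "real (card ((A \<rightarrow>\<^sub>E UNIV) \<inter> Bad i)) = 2 ^ card A / 2 ^ ?k"
      using power_diff[of "2::real" ?k "card A"] by simp
    then have "measure_pmf.prob ?p (Bad i) = 1 / 2 ^ ?k"
      using P assms(1) by (simp add: measure_pmf_of_set card_PiE)
    also have "\<dots> = 2 powr (- real ?k)" by (simp add: powr_minus_divide powr_realpow)
    also have "\<dots> \<le> 2 powr (- a)" using assms(3)[OF that] by simp
    finally show ?thesis .
  qed
  have "- (\<Union>i\<in>E. Bad i) \<subseteq> {x. \<forall>i\<in>E. clause_fixed (\<phi> i) A B x}"
    by (auto simp: Bad_def clause_fixed_def clause_sat_def)
  then have "measure_pmf.prob ?p (- (\<Union>i\<in>E. Bad i)) \<le> measure_pmf.prob ?p {x. \<forall>i\<in>E. clause_fixed (\<phi> i) A B x}"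
    by (rule measure_pmf.finite_measure_mono) simp
  moreover have "measure_pmf.prob ?p (- (\<Union>i\<in>E. Bad i)) = 1 - measure_pmf.prob ?p (\<Union>i\<in>E. Bad i)"
    using measure_pmf.prob_compl[of "\<Union>i\<in>E. Bad i" ?p] by (simp add: Compl_eq_Diff_UNIV)
  moreover have "measure_pmf.prob ?p (\<Union>i\<in>E. Bad i) \<le> real (card E) * 2 powr (- a)"
  proof -
    have "measure_pmf.prob ?p (\<Union>i\<in>E. Bad i) \<le> (\<Sum>i\<in>E. measure_pmf.prob ?p (Bad i))"
      using assms(2) by (intro measure_pmf.finite_measure_subadditive_finite) auto
    also have "\<dots> \<le> (\<Sum>i\<in>E. 2 powr (- a))" by (intro sum_mono bad)
    finally show ?thesis by simp
  qed
  ultimately show ?thesis by linarith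
qed

lemma has_dense_clause_set_if_small_neighbourhood:
  assumes \<phi>: "\<phi> \<in> cnf_space m n D" and A: "A \<subseteq> {0..<n}"
    and S: "S \<subseteq> {0..<m}" "S \<noteq> {}" "real (card S) \<le> \<rho> * real n / real D"
    and deg: "\<And>i. i \<in> S \<Longrightarrow> \<delta> * real D \<le> real (card (fst (\<phi> i) \<inter> A))"
    and small: "real (card (\<Union>i\<in>S. fst (\<phi> i) \<inter> A)) < \<delta> * real D / 2 * real (card S)"
    and \<delta>: "0 \<le> \<delta>" "\<delta> \<le> 1" and \<rho>: "0 \<le> \<rho>" "\<rho> \<le> 1" and "0 < D"
  shows "has_dense_clause_set \<delta> \<rho> m n D \<phi>"
proof -
  let ?N = "\<Union>i\<in>S. fst (\<phi> i) \<inter> A"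
  define t where "t = nat \<lfloor>\<delta> * real D * real (card S) / 2\<rfloor>"
  have "finite S" using S finite_subset by blast
  then have s1: "1 \<le> card S" using S by (simp add: Suc_le_eq card_gt_0_iff)
  have "card ?N \<le> t" using small unfolding t_def by (simp add: le_nat_floor mult_ac)
  have "real t \<le> \<delta> * real D * real (card S) / 2"
    using of_nat_floor[of "\<delta> * real D * real (card S) / 2"] \<delta> unfolding t_def by simp
  also have "\<dots> \<le> \<delta> * real D * (\<rho> * real n / real D) / 2"
    using S \<delta> by (intro divide_right_mono mult_left_mono) auto
  also have "\<dots> = \<delta> * \<rho> * real n / 2" using \<open>0 < D\<close> by simp
  also have "\<dots> \<le> real n" using \<delta> \<rho> mult_le_one[of \<delta> \<rho>] mult_right_mono[of "\<delta> * \<rho>" 1 "real n"] by simp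
  finally have "t \<le> n" by simp
  then obtain T where T: "?N \<subseteq> T" "T \<subseteq> {0..<n}" "card T = t"
    using obtain_superset_with_card[of "{0..<n}" ?N t] A \<open>card ?N \<le> t\<close> by auto
  have "nat \<lceil>\<delta> * real D\<rceil> \<le> card (fst (\<phi> i) \<inter> T)" if i: "i \<in> S" for i
  proof -
    have "card (fst (\<phi> i) \<inter> A) \<le> card (fst (\<phi> i) \<inter> T)"
      using T(1) i cnf_space_clause[OF \<phi>, of i] S by (intro card_mono) auto
    then show ?thesis using deg[OF i] by (simp add: nat_le_iff ceiling_le_iff)
  qed
  then show ?thesis
    unfolding has_dense_clause_set_def using s1 S T t_def by blast
qed

lemma bip_expander_if_no_dense_clause_set:
  assumes \<phi>: "\<phi> \<in> cnf_space m n D" and A: "A \<subseteq> {0..<n}" and L: "L \<subseteq> {0..<m}"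
    and deg: "\<And>i. i \<in> L \<Longrightarrow> \<delta> * real D \<le> real (card (fst (\<phi> i) \<inter> A))"
    and sparse: "\<not> has_dense_clause_set \<delta> \<rho> m n D \<phi>"
    and "0 \<le> \<delta>" "\<delta> \<le> 1" "0 \<le> \<rho>" "\<rho> \<le> 1" "0 < D"
  shows "bip_expander L (\<lambda>i. fst (\<phi> i) \<inter> A) (\<rho> * real n / real D) D (\<delta> * real D / 2)"
  unfolding bip_expander_def
proof (intro conjI ballI allI impI)
  fix i assume "i \<in> L"
  then show "card (fst (\<phi> i) \<inter> A) \<le> D"
    using L cnf_space_clause[OF \<phi>, of i] card_mono[of "fst (\<phi> i)" "fst (\<phi> i) \<inter> A"] by auto
next
  fix S assume S: "S \<subseteq> L \<and> real (card S) \<le> \<rho> * real n / real D"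
  show "\<delta> * real D / 2 * real (card S) \<le> real (card (\<Union>i\<in>S. fst (\<phi> i) \<inter> A))"
  proof (rule ccontr)
    assume "\<not> ?thesis"
    moreover have "S \<noteq> {}" using calculation by auto
    ultimately have "has_dense_clause_set \<delta> \<rho> m n D \<phi>"
      using S L deg assms(6-) by (intro has_dense_clause_set_if_small_neighbourhood[OF \<phi> A]) auto
    with sparse show False ..
  qed
qed

lemma good_partition_if_typical:
  assumes \<phi>: "\<phi> \<in> cnf_space m n D" and X: "X \<subseteq> {0..<n}"
    and \<delta>: "0 < \<delta>" "\<delta> \<le> 1/10" and \<rho>: "0 \<le> \<rho>" "\<rho> \<le> 1" and "0 < D"
    and few: "real (card (unbalanced_clauses \<delta> m n D \<phi> X)) \<le> 2 powr (0.7 * real D)"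
    and sparse: "\<not> has_dense_clause_set \<delta> \<rho> m n D \<phi>"
  shows "good_partition \<delta> (1/5) \<rho> m n D \<phi> X ({0..<n} - X)"
proof -
  define EA where "EA = error_set \<delta> m D \<phi> X"
  define EB where "EB = error_set \<delta> m D \<phi> ({0..<n} - X)"
  have few': "real (card E) * 2 powr (- ((1 - \<delta>) * D)) \<le> 2 powr (- (1/5) * D)"
    if "E \<subseteq> EA \<union> EB" for E
  proof -
    have "0.9 * real D \<le> (1 - \<delta>) * D" using \<delta> by (intro mult_right_mono) auto
    then have "2 powr (- ((1 - \<delta>) * D)) \<le> 2 powr (- 0.9 * D)" by simp
    moreover have "real (card E) \<le> 2 powr (0.7 * D)"
      using card_mono[OF _ that] few by (simp add: EA_def EB_def unbalanced_clauses_def error_set_def)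
    ultimately have "real (card E) * 2 powr (- ((1 - \<delta>) * D)) \<le> 2 powr (0.7 * D) * 2 powr (- 0.9 * D)"
      by (intro mult_mono) auto
    then show ?thesis by (simp add: powr_add[symmetric])
  qed
  have "1 - real (card EA) * 2 powr (- ((1 - \<delta>) * D))
      \<le> measure_pmf.prob (pmf_of_set (X \<rightarrow>\<^sub>E UNIV)) {x. \<forall>i\<in>EA. clause_fixed (\<phi> i) X ({0..<n} - X) x}"
    by (rule prob_clauses_fixed_ge) (auto simp: EA_def error_set_def intro: finite_subset[OF X])
  moreover have "1 - real (card EB) * 2 powr (- ((1 - \<delta>) * D))
      \<le> measure_pmf.prob (pmf_of_set (({0..<n} - X) \<rightarrow>\<^sub>E UNIV)) {y. \<forall>i\<in>EB. clause_fixed (\<phi> i) ({0..<n} - X) X y}"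
    by (rule prob_clauses_fixed_ge) (auto simp: EB_def error_set_def)
  moreover have "bip_expander ({0..<m} - EA - EB) (\<lambda>i. fst (\<phi> i) \<inter> X) (\<rho> * real n / real D) D (\<delta> * real D / 2)"
    using X \<delta> \<rho> \<open>0 < D\<close> balanced_clause_side_ge[OF \<phi>, of _ \<delta> X]
    by (intro bip_expander_if_no_dense_clause_set[OF \<phi> _ _ _ sparse]) (auto simp: EB_def)
  moreover have "bip_expander ({0..<m} - EA - EB) (\<lambda>i. fst (\<phi> i) \<inter> ({0..<n} - X)) (\<rho> * real n / real D) D (\<delta> * real D / 2)"
    using X \<delta> \<rho> \<open>0 < D\<close> balanced_clause_side_ge[OF \<phi>, of _ \<delta> "{0..<n} - X"]
    by (intro bip_expander_if_no_dense_clause_set[OF \<phi> _ _ _ sparse]) (auto simp: EA_def double_diff)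
  ultimately show ?thesis
    using few'[of EA] few'[of EB]
    unfolding good_partition_def Let_def EA_def[symmetric] EB_def[symmetric] by auto
qed

section \<open>Unbalanced clauses\<close>

lemma cnf_space_nonempty: "D \<le> n \<Longrightarrow> cnf_space m n D \<noteq> {}"
  using card_cnf_space[of m n D] clause_space_nonempty[of D n] finite_clause_space[of n D]
  by (metis card.empty card_0_eq power_not_zero)

lemma random_cnf_partition_eq:
  assumes "D \<le> n"
  shows "pair_pmf (random_cnf m n D) (random_partition n) = pmf_of_set (cnf_space m n D \<times> Pow {0..<n})"
  unfolding random_cnf_def random_partition_def
  using assms finite_cnf_space cnf_space_nonempty by (intro pair_pmf_of_set) auto

lemma card_unbalanced_partitions_le:
  fixes \<delta> :: real
  assumes "finite U" "S \<subseteq> U" "card S = D" "0 < \<delta>" "\<delta> \<le> 1/10"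
  shows "real (card {X \<in> Pow U. (1-\<delta>) * D < real (card (S \<inter> X)) \<or> (1-\<delta>) * D < real (card (S \<inter> (U - X)))})
         \<le> 2 * 2 powr (- 0.4 * D) * 2 ^ card U"
proof -
  define P where "P j \<longleftrightarrow> (1-\<delta>) * D < real j \<or> (1-\<delta>) * D < real D - real j" for j
  have "finite S" using assms finite_subset by blast
  then have "{X \<in> Pow U. (1-\<delta>) * D < real (card (S \<inter> X)) \<or> (1-\<delta>) * D < real (card (S \<inter> (U - X)))}
      = {X \<in> Pow U. P (card (S \<inter> X))}"
    using card_Int_add_card_Int_Diff[of S U] assms unfolding P_def
    by (intro Collect_cong conj_cong refl) (metis add_diff_cancel_left' of_nat_add)
  moreover have "D \<le> card U" using assms card_mono by blast
  ultimately have "real (card {X \<in> Pow U. (1-\<delta>) * D < real (card (S \<inter> X)) \<or> (1-\<delta>) * D < real (card (S \<inter> (U - X)))})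
      = (\<Sum>j | j \<le> D \<and> P j. real (D choose j)) * (2 ^ card U / 2 ^ D)"
    using card_Pow_filter_card_Int[OF assms(1,2), of P] assms(3) power_diff[of "2::real" D "card U"]
    by simp
  also have "\<dots> \<le> 2 * 2 powr (0.6 * D) * (2 ^ card U / 2 ^ D)"
    using sum_binomial_unbalanced_le[OF assms(4,5), of D] unfolding P_def by (intro mult_right_mono) auto
  also have "\<dots> = 2 * 2 powr (- 0.4 * D) * 2 ^ card U"
  proof -
    have "2 powr (0.6 * D) = 2 powr (- 0.4 * D) * 2 ^ D"
      by (simp add: powr_add[symmetric] powr_realpow[symmetric])
    then show ?thesis by simp
  qed
  finally show ?thesis .
qed

lemma card_unbalanced_at_clause_le:
  assumes "i < m" "0 < \<delta>" "\<delta> \<le> 1/10"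
  shows "real (card {\<omega> \<in> cnf_space m n D \<times> Pow {0..<n}. i \<in> unbalanced_clauses \<delta> m n D (fst \<omega>) (snd \<omega>)})
         \<le> real (card (cnf_space m n D)) * 2 ^ n * (2 * 2 powr (- 0.4 * D))"
proof -
  let ?Unb = "\<lambda>\<phi> X. i \<in> unbalanced_clauses \<delta> m n D \<phi> X"
  have "{\<omega> \<in> cnf_space m n D \<times> Pow {0..<n}. ?Unb (fst \<omega>) (snd \<omega>)}
      = Sigma (cnf_space m n D) (\<lambda>\<phi>. {X \<in> Pow {0..<n}. ?Unb \<phi> X})"
    by auto
  then have "real (card {\<omega> \<in> cnf_space m n D \<times> Pow {0..<n}. ?Unb (fst \<omega>) (snd \<omega>)})
      = (\<Sum>\<phi>\<in>cnf_space m n D. real (card {X \<in> Pow {0..<n}. ?Unb \<phi> X}))"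
    using finite_cnf_space by (simp add: card_SigmaI)
  also have "\<dots> \<le> (\<Sum>\<phi>\<in>cnf_space m n D. 2 * 2 powr (- 0.4 * D) * 2 ^ n)"
  proof (rule sum_mono)
    fix \<phi> assume "\<phi> \<in> cnf_space m n D"
    then show "real (card {X \<in> Pow {0..<n}. ?Unb \<phi> X}) \<le> 2 * 2 powr (- 0.4 * D) * 2 ^ n"
      using card_unbalanced_partitions_le[of "{0..<n}" "fst (\<phi> i)" D \<delta>] cnf_space_clause[of \<phi> m n D i]
        assms by (simp add: unbalanced_clauses_def error_set_def)
  qed
  finally show ?thesis by (simp add: mult_ac)
qed

lemma prob_many_unbalanced_le:
  assumes "D \<le> n" "0 < \<delta>" "\<delta> \<le> 1/10"
  shows "measure_pmf.prob (pair_pmf (random_cnf m n D) (random_partition n))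
           {(\<phi>, X). 2 powr (0.7 * D) < real (card (unbalanced_clauses \<delta> m n D \<phi> X))}
         \<le> 2 * real m * 2 powr (- 1.1 * D)"
proof -
  define \<Omega> where "\<Omega> = cnf_space m n D \<times> Pow {0..<n}"
  define Q where "Q \<omega> i \<longleftrightarrow> i \<in> unbalanced_clauses \<delta> m n D (fst \<omega>) (snd \<omega>)" for \<omega> :: "cnf \<times> nat set" and i
  define K :: real where "K = 2 powr (0.7 * D)"
  have fin: "finite \<Omega>" unfolding \<Omega>_def using finite_cnf_space by simp
  have ne: "\<Omega> \<noteq> {}" using assms(1) cnf_space_nonempty by (auto simp: \<Omega>_def)
  have card\<Omega>: "real (card \<Omega>) = real (card (cnf_space m n D)) * 2 ^ n"
    by (simp add: \<Omega>_def card_cartesian_product card_Pow)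
  have "\<Omega> \<inter> {(\<phi>, X). K < real (card (unbalanced_clauses \<delta> m n D \<phi> X))}
      = {\<omega> \<in> \<Omega>. K < real (card {i \<in> {0..<m}. Q \<omega> i})}"
  proof -
    have "unbalanced_clauses \<delta> m n D \<phi> X = {i \<in> {0..<m}. Q (\<phi>, X) i}" for \<phi> X
      by (auto simp: Q_def unbalanced_clauses_def error_set_def)
    then show ?thesis by auto
  qed
  then have "measure_pmf.prob (pair_pmf (random_cnf m n D) (random_partition n))
          {(\<phi>, X). K < real (card (unbalanced_clauses \<delta> m n D \<phi> X))}
      = real (card {\<omega> \<in> \<Omega>. K < real (card {i \<in> {0..<m}. Q \<omega> i})}) / real (card \<Omega>)"
    unfolding random_cnf_partition_eq[OF assms(1)] \<Omega>_def[symmetric] measure_pmf_of_set[OF ne fin]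
    by (simp only:)
  also have "\<dots> \<le> (\<Sum>i\<in>{0..<m}. real (card {\<omega> \<in> \<Omega>. Q \<omega> i})) / K / real (card \<Omega>)"
    using card_Markov[OF fin, of "{0..<m}" K Q] by (intro divide_right_mono) (auto simp: K_def)
  also have "\<dots> \<le> (\<Sum>i\<in>{0..<m}. real (card \<Omega>) * (2 * 2 powr (- 0.4 * D))) / K / real (card \<Omega>)"
    using card_unbalanced_at_clause_le[of _ m \<delta> n D] assms
    by (intro divide_right_mono sum_mono) (auto simp: K_def Q_def \<Omega>_def card\<Omega>[unfolded \<Omega>_def])
  also have "\<dots> = 2 * real m * 2 powr (- 1.1 * D)"
  proof -
    have "2 powr (- 0.4 * D) = K * 2 powr (- 1.1 * D)" unfolding K_def by (simp add: powr_add[symmetric])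
    then show ?thesis using fin ne by (simp add: K_def card_gt_0_iff)
  qed
  finally show ?thesis unfolding K_def .
qed

section \<open>Dense clause sets\<close>

text \<open>Chosen so that (e \<rho>)^(\<delta>Ds/2) = 2^(-3Ds), which beats the factor 2^(Ds) in the
  first-moment bound for dense clause sets.\<close>
definition expansion_radius :: "real \<Rightarrow> real" where
  "expansion_radius \<delta> = 2 powr (- 6 / \<delta>) / exp 1"

lemma expansion_radius_pos: "0 < expansion_radius \<delta>"
  by (simp add: expansion_radius_def)

lemma exp_mult_expansion_radius: "exp 1 * expansion_radius \<delta> = 2 powr (- 6 / \<delta>)"
  by (simp add: expansion_radius_def)

lemma exp_mult_expansion_radius_le_1:
  assumes "0 < \<delta>"
  shows "exp 1 * expansion_radius \<delta> \<le> 1"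
proof -
  have "- 6 / \<delta> \<le> 0" using assms by simp
  then show ?thesis
    unfolding exp_mult_expansion_radius using powr_mono[of "- 6 / \<delta>" 0 "2::real"] by simp
qed

lemma expansion_radius_le_1:
  assumes "0 < \<delta>"
  shows "expansion_radius \<delta> \<le> 1"
proof -
  have "1 * expansion_radius \<delta> \<le> exp 1 * expansion_radius \<delta>"
    using expansion_radius_pos[of \<delta>] by (intro mult_right_mono) auto
  then show ?thesis using exp_mult_expansion_radius_le_1[OF assms] by simp
qed

lemma card_dense_clause_set_le:
  "card {\<phi> \<in> cnf_space m n D. has_dense_clause_set \<delta> \<rho> m n D \<phi>}
   \<le> (\<Sum>s\<in>{1..nat \<lfloor>\<rho> * real n / real D\<rfloor>}. \<Sum>I | I \<subseteq> {0..<m} \<and> card I = s.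
        \<Sum>T | T \<subseteq> {0..<n} \<and> card T = nat \<lfloor>\<delta> * real D * real s / 2\<rfloor>.
          card {\<phi> \<in> cnf_space m n D. \<forall>i\<in>I. nat \<lceil>\<delta> * real D\<rceil> \<le> card (fst (\<phi> i) \<inter> T)})"
  (is "card ?Dense \<le> (\<Sum>s\<in>?R. \<Sum>I\<in>?I s. \<Sum>T\<in>?T s. card (?Ev I T))")
proof -
  have fin: "finite (?I s)" "finite (?T s)" "finite (?Ev I T)" for s I T
    using finite_cnf_space by (auto intro: finite_subset[of _ "Pow {0..<m}"] finite_subset[of _ "Pow {0..<n}"])
  have "?Dense \<subseteq> (\<Union>s\<in>?R. \<Union>I\<in>?I s. \<Union>T\<in>?T s. ?Ev I T)"
  proof
    fix \<phi> assume "\<phi> \<in> ?Dense"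
    then obtain s I T where "\<phi> \<in> cnf_space m n D" "1 \<le> s" "real s \<le> \<rho> * real n / real D"
      "I \<in> ?I s" "T \<in> ?T s" "\<forall>i\<in>I. nat \<lceil>\<delta> * real D\<rceil> \<le> card (fst (\<phi> i) \<inter> T)"
      unfolding has_dense_clause_set_def by blast
    then show "\<phi> \<in> (\<Union>s\<in>?R. \<Union>I\<in>?I s. \<Union>T\<in>?T s. ?Ev I T)"
      by (intro UN_I[of s] UN_I[of I] UN_I[of T]) (auto intro: le_nat_floor)
  qed
  then have "card ?Dense \<le> card (\<Union>s\<in>?R. \<Union>I\<in>?I s. \<Union>T\<in>?T s. ?Ev I T)"
    using fin by (intro card_mono) auto
  also have "\<dots> \<le> (\<Sum>s\<in>?R. card (\<Union>I\<in>?I s. \<Union>T\<in>?T s. ?Ev I T))"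
    by (rule card_UN_le) simp
  also have "\<dots> \<le> (\<Sum>s\<in>?R. \<Sum>I\<in>?I s. card (\<Union>T\<in>?T s. ?Ev I T))"
    using fin by (intro sum_mono card_UN_le)
  also have "\<dots> \<le> (\<Sum>s\<in>?R. \<Sum>I\<in>?I s. \<Sum>T\<in>?T s. card (?Ev I T))"
    using fin by (intro sum_mono card_UN_le)
  finally show ?thesis .
qed

lemma dense_clause_set_term_le:
  fixes s n D :: nat and \<delta> :: real
  defines "t \<equiv> nat \<lfloor>\<delta> * real D * real s / 2\<rfloor>" and "k \<equiv> nat \<lceil>\<delta> * real D\<rceil>"
  assumes s: "real s \<le> expansion_radius \<delta> * real n / real D" and "0 < D" "0 < \<delta>" "\<delta> \<le> 1"
  shows "real (n choose t) * (2 ^ D * (real t / real n) ^ k) ^ s \<le> 2 powr (- 2 * real D * real s)"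
proof -
  let ?\<rho> = "expansion_radius \<delta>"
  have t: "real t \<le> \<delta> * D * s / 2"
    using of_nat_floor[of "\<delta> * D * s / 2"] \<open>0 < \<delta>\<close> unfolding t_def by simp
  have k: "\<delta> * D \<le> real k" unfolding k_def by linarith
  then have ks: "\<delta> * D * s \<le> real (k * s)" by (simp add: mult_right_mono)
  have "real D * real s \<le> ?\<rho> * real n" using s \<open>0 < D\<close> by (simp add: field_simps)
  then have "\<delta> * (real D * real s) \<le> \<delta> * (?\<rho> * real n)" using \<open>0 < \<delta>\<close> by (intro mult_left_mono) auto
  then have "real t \<le> \<delta> * (?\<rho> * n) / 2" using t by (simp add: mult_ac)
  also have "\<dots> \<le> ?\<rho> * n"
    using \<open>\<delta> \<le> 1\<close> \<open>0 < \<delta>\<close> expansion_radius_pos[of \<delta>]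
      mult_right_mono[of \<delta> 1 "?\<rho> * real n"] by simp
  finally have t\<rho>: "real t \<le> ?\<rho> * n" .
  have "2 * t \<le> k * s" using t ks by linarith
  have "real (n choose t) * (real t / n) ^ (k * s) \<le> (exp 1 * ?\<rho>) ^ (k * s - t)"
    using binomial_mult_ratio_power_le[OF \<open>2 * t \<le> k * s\<close> t\<rho>] expansion_radius_pos[of \<delta>]
      exp_mult_expansion_radius_le_1[OF \<open>0 < \<delta>\<close>] by simp
  also have "\<dots> = (exp 1 * ?\<rho>) powr real (k * s - t)"
    using expansion_radius_pos[of \<delta>] by (simp add: powr_realpow)
  also have "\<dots> \<le> (exp 1 * ?\<rho>) powr (\<delta> * D * s / 2)"
    using t ks \<open>2 * t \<le> k * s\<close> expansion_radius_pos[of \<delta>] exp_mult_expansion_radius_le_1[OF \<open>0 < \<delta>\<close>]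
    by (intro powr_mono') (auto simp: of_nat_diff)
  also have "\<dots> = 2 powr (- 3 * D * s)"
    unfolding exp_mult_expansion_radius using \<open>0 < \<delta>\<close> by (simp add: powr_powr field_simps)
  finally have "real (n choose t) * (real t / n) ^ (k * s) \<le> 2 powr (- 3 * D * s)" .
  moreover have "(2::real) ^ (D * s) = 2 powr real (D * s)" by (rule powr_realpow[symmetric]) simp
  ultimately have "2 ^ (D * s) * (real (n choose t) * (real t / n) ^ (k * s)) \<le> 2 powr (D * s) * 2 powr (- 3 * D * s)"
    by (simp add: mult_left_mono)
  then show ?thesis
    by (simp add: power_mult_distrib power_mult[symmetric] powr_add[symmetric] mult_ac)
qed

lemma dense_clause_set_summand_le:
  fixes s m n D :: nat and \<delta> :: real
  defines "t \<equiv> nat \<lfloor>\<delta> * real D * real s / 2\<rfloor>" and "k \<equiv> nat \<lceil>\<delta> * real D\<rceil>"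
  assumes "1 \<le> s" "real s \<le> expansion_radius \<delta> * real n / real D" "0 < D" "0 < \<delta>" "\<delta> \<le> 1"
    and q1: "real m * 2 powr (- 2 * real D) \<le> 1"
  shows "real (m choose s) * (real (n choose t) * (2 ^ D * (real t / real n) ^ k) ^ s)
         \<le> real m * 2 powr (- 2 * real D)"
proof -
  have "real (n choose t) * (2 ^ D * (real t / n) ^ k) ^ s \<le> 2 powr (- 2 * real D * real s)"
    unfolding t_def k_def using assms by (intro dense_clause_set_term_le) auto
  also have "\<dots> = (2 powr (- 2 * real D)) ^ s" by (simp add: powr_powr powr_realpow[symmetric] mult_ac)
  finally have "real (n choose t) * (2 ^ D * (real t / n) ^ k) ^ s \<le> (2 powr (- 2 * real D)) ^ s" .
  moreover have "real (m choose s) \<le> real m ^ s"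
    by (cases "s \<le> m") (auto simp: binomial_le_pow binomial_eq_0 simp flip: of_nat_power)
  ultimately have "real (m choose s) * (real (n choose t) * (2 ^ D * (real t / n) ^ k) ^ s)
      \<le> real m ^ s * (2 powr (- 2 * real D)) ^ s"
    by (intro mult_mono) auto
  also have "\<dots> = (real m * 2 powr (- 2 * real D)) ^ s" by (simp add: power_mult_distrib)
  also have "\<dots> \<le> real m * 2 powr (- 2 * real D)"
    using \<open>1 \<le> s\<close> q1 by (intro power_decreasing[of 1, simplified]) auto
  finally show ?thesis .
qed

lemma prob_dense_clause_set_le:
  assumes "D \<le> n" "0 < D" "0 < \<delta>" "\<delta> \<le> 1" and q1: "real m * 2 powr (- 2 * real D) \<le> 1"
  shows "measure_pmf.prob (random_cnf m n D) {\<phi>. has_dense_clause_set \<delta> (expansion_radius \<delta>) m n D \<phi>}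
         \<le> real n * (real m * 2 powr (- 2 * real D))"
proof -
  let ?\<rho> = "expansion_radius \<delta>" and ?CNF = "cnf_space m n D"
  define R where "R = nat \<lfloor>?\<rho> * real n / real D\<rfloor>"
  define t where "t s = nat \<lfloor>\<delta> * real D * real s / 2\<rfloor>" for s :: nat
  define k where "k = nat \<lceil>\<delta> * real D\<rceil>"
  define q where "q = real m * 2 powr (- 2 * real D)"
  have "0 < n" using assms by simp
  have CNF: "finite ?CNF" "?CNF \<noteq> {}" using finite_cnf_space cnf_space_nonempty assms(1) by auto
  have "k \<le> D" using \<open>\<delta> \<le> 1\<close> mult_right_mono[of \<delta> 1 "real D"] unfolding k_def by (simp add: nat_le_iff ceiling_le_iff)
  have R: "real R \<le> ?\<rho> * real n / real D"
    unfolding R_def using expansion_radius_pos[of \<delta>] by (simp add: of_nat_floor)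
  have summand_le: "real (m choose s) * (real (n choose t s) * (2 ^ D * (real (t s) / n) ^ k) ^ s) \<le> q"
    if "s \<in> {1..R}" for s
    unfolding t_def k_def q_def using that R assms by (intro dense_clause_set_summand_le) auto
  have "measure_pmf.prob (random_cnf m n D) {\<phi>. has_dense_clause_set \<delta> ?\<rho> m n D \<phi>}
      = real (card {\<phi> \<in> ?CNF. has_dense_clause_set \<delta> ?\<rho> m n D \<phi>}) / real (card ?CNF)"
    unfolding random_cnf_def using CNF by (simp add: measure_pmf_of_set Int_def)
  also have "\<dots> \<le> (\<Sum>s\<in>{1..R}. \<Sum>I | I \<subseteq> {0..<m} \<and> card I = s. \<Sum>T | T \<subseteq> {0..<n} \<and> card T = t s.
        real (card {\<phi> \<in> ?CNF. \<forall>i\<in>I. k \<le> card (fst (\<phi> i) \<inter> T)}) / real (card ?CNF))"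
    using card_dense_clause_set_le[of m n D \<delta> ?\<rho>] CNF
    by (simp add: R_def t_def k_def sum_divide_distrib[symmetric] divide_right_mono flip: of_nat_sum)
  also have "\<dots> \<le> (\<Sum>s\<in>{1..R}. \<Sum>I | I \<subseteq> {0..<m} \<and> card I = s. \<Sum>T | T \<subseteq> {0..<n} \<and> card T = t s.
        (2 ^ D * (real (t s) / n) ^ k) ^ s)"
  proof (intro sum_mono)
    fix s I T assume "I \<in> {I. I \<subseteq> {0..<m} \<and> card I = s}" "T \<in> {T. T \<subseteq> {0..<n} \<and> card T = t s}"
    then show "real (card {\<phi> \<in> ?CNF. \<forall>i\<in>I. k \<le> card (fst (\<phi> i) \<inter> T)}) / real (card ?CNF)
        \<le> (2 ^ D * (real (t s) / n) ^ k) ^ s"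
      using cnf_hitting_ratio_le[of I m T n k D] \<open>k \<le> D\<close> assms(1) \<open>0 < n\<close> by auto
  qed
  also have "\<dots> = (\<Sum>s\<in>{1..R}. real (m choose s) * (real (n choose t s) * (2 ^ D * (real (t s) / n) ^ k) ^ s))"
    by (simp add: n_subsets)
  also have "\<dots> \<le> (\<Sum>s\<in>{1..R}. q)"
    by (rule sum_mono) (rule summand_le)
  also have "\<dots> = real R * q" by simp
  also have "\<dots> \<le> real n * q"
  proof (intro mult_right_mono)
    have "?\<rho> * real n \<le> real D * real n"
      using expansion_radius_le_1[OF \<open>0 < \<delta>\<close>] \<open>0 < D\<close> by (intro mult_right_mono) auto
    then have "?\<rho> * real n / real D \<le> real n" using \<open>0 < D\<close> by (simp add: field_simps)
    then show "real R \<le> real n" using R by simp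
  qed (simp add: q_def)
  finally show ?thesis unfolding q_def .
qed

section \<open>Probability of a good partition\<close>

lemma prob_good_partition_ge:
  assumes "D \<le> n" "0 < D" "0 < \<delta>" "\<delta> \<le> 1/10" "real m * 2 powr (- 2 * real D) \<le> 1"
  shows "1 - (2 * real m * 2 powr (- 1.1 * D) + real n * (real m * 2 powr (- 2 * real D)))
         \<le> measure_pmf.prob (pair_pmf (random_cnf m n D) (random_partition n))
              {(\<phi>, X). good_partition \<delta> (1/5) (expansion_radius \<delta>) m n D \<phi> X ({0..<n} - X)}"
proof -
  let ?p = "pair_pmf (random_cnf m n D) (random_partition n)"
  let ?\<rho> = "expansion_radius \<delta>"
  define Unbalanced where
    "Unbalanced = {(\<phi>, X). 2 powr (0.7 * D) < real (card (unbalanced_clauses \<delta> m n D \<phi> X))}"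
  define Dense :: "(cnf \<times> nat set) set" where "Dense = {\<omega>. has_dense_clause_set \<delta> ?\<rho> m n D (fst \<omega>)}"
  have "1 - measure_pmf.prob ?p Unbalanced - measure_pmf.prob ?p Dense
      \<le> measure_pmf.prob ?p {(\<phi>, X). good_partition \<delta> (1/5) ?\<rho> m n D \<phi> X ({0..<n} - X)}"
  proof (rule prob_ge_one_minus_bad_events)
    fix \<omega> assume "\<omega> \<in> set_pmf ?p" "\<omega> \<notin> Unbalanced" "\<omega> \<notin> Dense"
    moreover have "set_pmf ?p = cnf_space m n D \<times> Pow {0..<n}"
      unfolding random_cnf_partition_eq[OF assms(1)] using finite_cnf_space cnf_space_nonempty[OF assms(1)]
      by (subst set_pmf_of_set) auto
    ultimately show "\<omega> \<in> {(\<phi>, X). good_partition \<delta> (1/5) ?\<rho> m n D \<phi> X ({0..<n} - X)}"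
      using assms expansion_radius_pos[of \<delta>] expansion_radius_le_1[of \<delta>]
      by (auto simp: Unbalanced_def Dense_def intro!: good_partition_if_typical)
  qed
  moreover have "measure_pmf.prob ?p Unbalanced \<le> 2 * real m * 2 powr (- 1.1 * D)"
    unfolding Unbalanced_def using assms by (intro prob_many_unbalanced_le) auto
  moreover have "measure_pmf.prob ?p Dense \<le> real n * (real m * 2 powr (- 2 * real D))"
    unfolding Dense_def prob_fst_pair_pmf using assms by (intro prob_dense_clause_set_le) auto
  ultimately show ?thesis by linarith
qed

section \<open>Asymptotics\<close>

lemma width_bounds:
  assumes "1 \<le> n" "0 \<le> c"
  shows "c * log 2 n \<le> real (width c n)" "real (width c n) \<le> c * log 2 n + 1"
proof -
  have "0 \<le> c * log 2 n" using assms by simp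
  then have "real (width c n) = real_of_int \<lceil>c * log 2 n\<rceil>" unfolding width_def by simp
  then show "c * log 2 n \<le> real (width c n)" "real (width c n) \<le> c * log 2 n + 1"
    by (simp_all add: ceiling_correct le_of_int_ceiling)
qed

lemma two_powr_neg_width_le:
  assumes "1 \<le> n" "0 \<le> c" "0 \<le> a"
  shows "2 powr (- a * real (width c n)) \<le> real n powr (- a * c)"
proof -
  have "2 powr (- a * real (width c n)) \<le> 2 powr (- a * (c * log 2 n))"
    using width_bounds(1)[OF assms(1,2)] assms(3) by (intro powr_mono) (auto simp: mult_left_mono)
  also have "\<dots> = (2 powr log 2 n) powr (- a * c)" by (simp add: powr_powr mult_ac)
  also have "\<dots> = real n powr (- a * c)" using assms(1) by simp
  finally show ?thesis .
qed

lemma num_clauses_mult_two_powr_le: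
  assumes "1 \<le> n" "0 \<le> c" "0 < \<alpha>" "1 \<le> b"
  shows "real (num_clauses \<alpha> c n) * 2 powr (- b * real (width c n)) \<le> \<alpha> * real n powr (1 - (b - 1) * c)"
proof -
  let ?D = "width c n"
  have "real (num_clauses \<alpha> c n) \<le> \<alpha> * 2 powr real ?D * real n"
    unfolding num_clauses_def using assms(3) of_nat_floor[of "\<alpha> * 2 ^ ?D * real n"] by (simp add: powr_realpow)
  then have "real (num_clauses \<alpha> c n) * 2 powr (- b * ?D) \<le> \<alpha> * real n * 2 powr (- (b - 1) * ?D)"
    by (auto intro: order_trans[OF mult_right_mono] simp: powr_add[symmetric] algebra_simps)
  also have "\<dots> \<le> \<alpha> * real n * real n powr (- (b - 1) * c)"
    using two_powr_neg_width_le[of n c "b - 1"] assms by (intro mult_left_mono) auto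
  also have "\<dots> = \<alpha> * (real n powr 1 * real n powr (- (b - 1) * c))"
    using assms(1) by simp
  also have "\<dots> = \<alpha> * real n powr (1 - (b - 1) * c)"
    by (simp only: powr_add[symmetric]) (simp add: algebra_simps)
  finally show ?thesis .
qed

lemma eventually_prob_good_partition_ge:
  fixes c \<alpha> \<delta> :: real
  assumes "40 \<le> c" "0 < \<alpha>" "0 < \<delta>" "\<delta> \<le> 1/10"
  shows "eventually (\<lambda>n. 1 - (2 * \<alpha> * real n powr (-3) + \<alpha> * real n powr (-38))
           \<le> measure_pmf.prob (pair_pmf (random_cnf (num_clauses \<alpha> c n) n (width c n)) (random_partition n))
               {(\<phi>, X). good_partition \<delta> (1/5) (expansion_radius \<delta>) (num_clauses \<alpha> c n) n (width c n)
                          \<phi> X ({0..<n} - X)}) at_top"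
proof -
  have "eventually (\<lambda>n::nat. 2 \<le> n \<and> c * log 2 n + 1 \<le> n \<and> \<alpha> * real n powr (-39) \<le> 1) at_top"
    using assms(1) by (intro eventually_conj eventually_ge_at_top) real_asymp+
  then show ?thesis
  proof eventually_elim
    case (elim n)
    define D where "D = width c n"
    define m where "m = num_clauses \<alpha> c n"
    have n: "1 \<le> n" "1 \<le> log 2 n" using elim by auto
    have "D \<le> n" using width_bounds(2)[OF n(1), of c] elim assms(1) unfolding D_def by linarith
    have "c * 1 \<le> c * log 2 n" using n(2) assms(1) by (intro mult_left_mono) auto
    then have "40 \<le> real D" using width_bounds(1)[OF n(1), of c] assms(1) unfolding D_def by linarith
    then have "0 < D" by simp
    have "real m * 2 powr (- 2 * real D) \<le> \<alpha> * real n powr (1 - (2 - 1) * c)"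
      unfolding m_def D_def using n assms by (intro num_clauses_mult_two_powr_le) auto
    also have "\<dots> \<le> \<alpha> * real n powr (-39)"
      using n assms by (intro mult_left_mono powr_mono) auto
    finally have q: "real m * 2 powr (- 2 * real D) \<le> \<alpha> * real n powr (-39)" .
    have "2 * real m * 2 powr (- 1.1 * real D) \<le> 2 * (\<alpha> * real n powr (1 - (1.1 - 1) * c))"
      unfolding m_def D_def using n assms num_clauses_mult_two_powr_le[of n c \<alpha> "1.1"] by simp
    also have "\<dots> \<le> 2 * (\<alpha> * real n powr (-3))"
      using n assms by (intro mult_left_mono powr_mono) auto
    finally have "2 * real m * 2 powr (- 1.1 * real D) \<le> 2 * \<alpha> * real n powr (-3)" by simp
    moreover have "real n * (real m * 2 powr (- 2 * real D)) \<le> \<alpha> * real n powr (-38)"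
      using mult_left_mono[OF q, of "real n"] n(1) by (simp add: powr_mult_base mult_ac)
    moreover have "1 - (2 * real m * 2 powr (- 1.1 * real D) + real n * (real m * 2 powr (- 2 * real D)))
        \<le> measure_pmf.prob (pair_pmf (random_cnf m n D) (random_partition n))
             {(\<phi>, X). good_partition \<delta> (1/5) (expansion_radius \<delta>) m n D \<phi> X ({0..<n} - X)}"
      using \<open>D \<le> n\<close> \<open>0 < D\<close> assms q elim by (intro prob_good_partition_ge) auto
    ultimately show ?case unfolding m_def D_def by linarith
  qed
qed

theorem mainTheorem2:
  fixes c \<alpha> \<delta> :: real
  assumes "c \<ge> 40" and "\<alpha> > 0" and "0 < \<delta>" and "\<delta> \<le> 1/10"
  shows "\<exists>\<epsilon>>0. \<exists>\<rho>>0.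
    (\<lambda>n. measure_pmf.prob
           (pair_pmf (random_cnf (num_clauses \<alpha> c n) n (width c n)) (random_partition n))
           {(\<phi>, X). good_partition \<delta> \<epsilon> \<rho> (num_clauses \<alpha> c n) n (width c n)
                        \<phi> X ({0..<n} - X)})
    \<longlonglongrightarrow> 1"
proof -
  define P where "P n = measure_pmf.prob
    (pair_pmf (random_cnf (num_clauses \<alpha> c n) n (width c n)) (random_partition n))
    {(\<phi>, X). good_partition \<delta> (1/5) (expansion_radius \<delta>) (num_clauses \<alpha> c n) n (width c n)
                 \<phi> X ({0..<n} - X)}" for n
  have "eventually (\<lambda>n. 1 - (2 * \<alpha> * real n powr (-3) + \<alpha> * real n powr (-38)) \<le> P n) at_top"
    unfolding P_def using eventually_prob_good_partition_ge[OF assms] .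
  moreover have "eventually (\<lambda>n. P n \<le> 1) at_top" by (simp add: P_def)
  moreover have "(\<lambda>n. 1 - (2 * \<alpha> * real n powr (-3) + \<alpha> * real n powr (-38))) \<longlonglongrightarrow> 1"
    by real_asymp
  ultimately have "P \<longlonglongrightarrow> 1" by (rule tendsto_sandwich) simp
  then show ?thesis
    unfolding P_def using expansion_radius_pos[of \<delta>] by (intro exI[of _ "1/5"] exI[of _ "expansion_radius \<delta>"]) auto
qed

end
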